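(* For $a\ge1$ let $R_a=[0,a]\times[0,1/a]$ and let $\lambda_1(a)$ be the first eigenvalue of the Dirichlet biharmonic (clamped plate) problem on $R_a$. Then $$\lambda_1(a)\ge \omega_1^4\left(a^4+a^{-4}\right)+2\pi^4,$$ where $\omega_1\approx4.73004$ is the first positive root of the equation $\cos(\omega)\cosh(\omega)=1$.
   Context: The clamped plate problem on a domain $\Omega$ is $\Delta^2 u=\lambda u$ in $\Omega$, $u=\partial u/\partial\nu=0$ on $\partial\Omega$; its first eigenvalue is $\lambda_1(\Omega)=\inf_{0\ne u\in H^2_0(\Omega)}\frac{\int_\Omega(\Delta u)^2}{\int_\Omega u^2}$. *)

theory Defs
  imports "HOL-Analysis.Analysis"
begin

definition px :: "(real \<times> real \<Rightarrow> real) \<Rightarrow> real \<times> real \<Rightarrow> real" where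
  "px u p = deriv (\<lambda>t. u (t, snd p)) (fst p)"

definition py :: "(real \<times> real \<Rightarrow> real) \<Rightarrow> real \<times> real \<Rightarrow> real" where
  "py u p = deriv (\<lambda>t. u (fst p, t)) (snd p)"

definition has_cont_partials :: "(real \<times> real \<Rightarrow> real) \<Rightarrow> bool" where
  "has_cont_partials u \<longleftrightarrow>
     (\<forall>p. (\<lambda>t. u (t, snd p)) differentiable (at (fst p)) \<and>
          (\<lambda>t. u (fst p, t)) differentiable (at (snd p))) \<and>
     continuous_on UNIV (px u) \<and> continuous_on UNIV (py u)"

definition C2 :: "(real \<times> real \<Rightarrow> real) \<Rightarrow> bool" where
  "C2 u \<longleftrightarrow> continuous_on UNIV u \<and> has_cont_partials u \<and>
     has_cont_partials (px u) \<and> has_cont_partials (py u)"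

definition laplacian :: "(real \<times> real \<Rightarrow> real) \<Rightarrow> real \<times> real \<Rightarrow> real" where
  "laplacian u p = px (px u) p + py (py u) p"

text \<open>C^2 functions with compact support inside the open set Omega; this class is
  dense in H^2_0(Omega) and contained in it.\<close>
definition C2c :: "(real \<times> real) set \<Rightarrow> (real \<times> real \<Rightarrow> real) set" where
  "C2c \<Omega> = {u. C2 u \<and> (\<exists>K. compact K \<and> K \<subseteq> \<Omega> \<and> (\<forall>p. p \<notin> K \<longrightarrow> u p = 0))}"

definition clamped_lambda1 :: "(real \<times> real) set \<Rightarrow> real" where
  "clamped_lambda1 \<Omega> =
     (INF u \<in> {u \<in> C2c \<Omega>. \<exists>p. u p \<noteq> 0}.
        integral \<Omega> (\<lambda>p. (laplacian u p)^2) / integral \<Omega> (\<lambda>p. (u p)^2))"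

text \<open>Open rectangle (0,a) x (0,1/a); its boundary has measure zero.\<close>
definition rect :: "real \<Rightarrow> (real \<times> real) set" where
  "rect a = {0<..<a} \<times> {0<..<1/a}"

definition omega1 :: real where
  "omega1 = (THE w. w > 0 \<and> cos w * cosh w = 1 \<and>
                    (\<forall>v. 0 < v \<and> v < w \<longrightarrow> cos v * cosh v \<noteq> 1))"

end

theory Submission
  imports Defs
begin

text \<open>
  Since \<open>\<lambda>\<^sub>1\<close> is an infimum of Rayleigh quotients, it suffices to bound \<open>\<integral>(\<Delta>u)\<^sup>2\<close> from below
  for every \<open>C\<^sup>2\<close> function \<open>u\<close> with compact support in \<open>(0,a) \<times> (0,b)\<close>, \<open>b = 1/a\<close>. Expand
  \<open>(\<Delta>u)\<^sup>2 = u\<^sub>x\<^sub>x\<^sup>2 + 2 u\<^sub>x\<^sub>x u\<^sub>y\<^sub>y + u\<^sub>y\<^sub>y\<^sup>2\<close>. On every line parallel to an axis the one-dimensional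
  clamped beam inequality \<open>\<integral>f''\<^sup>2 \<ge> (\<omega>\<^sub>1/L)\<^sup>4 \<integral>f\<^sup>2\<close> bounds the pure terms, and the mixed term obeys
  \<open>\<integral>u\<^sub>x\<^sub>x u\<^sub>y\<^sub>y \<ge> (\<pi>/b)\<^sup>2 \<integral>u\<^sub>x\<^sup>2 \<ge> (\<pi>/a)\<^sup>2 (\<pi>/b)\<^sup>2 \<integral>u\<^sup>2\<close> by two Wirtinger inequalities.

  Both one-dimensional inequalities come from Picone identities \<open>S' = P - Q - R\<^sup>2\<close> with \<open>S\<close> taking
  equal values at the ends. For the beam, \<open>S\<close> is built from two solutions of \<open>y'''' = m\<^sup>4 y\<close>
  (Krylov functions) whose Wronskian \<open>2 m\<^sup>4 (1 - cos (m x) cosh (m x))\<close> has no zero for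
  \<open>0 < m x < \<omega>\<^sub>1\<close>; this is the only place where \<open>\<omega>\<^sub>1\<close> enters. The mixed term is treated with
  difference quotients in \<open>x\<close>, so that no symmetry of the mixed partial derivatives is needed.
\<close>

section \<open>The first positive root of \<open>cos t * cosh t = 1\<close>\<close>

lemma cos_mult_cosh_lt_1:
  fixes t :: real
  assumes "0 < t" "t \<le> 4"
  shows "cos t * cosh t < 1"
proof (cases "t < pi/2")
  case False
  have "cos (t - pi) \<ge> 0"
    using False assms pi_gt3 by (intro cos_ge_zero) auto
  then have "cos t \<le> 0" by (simp add: cos_diff)
  moreover have "cosh t > 0" by (simp add: cosh_real_pos)
  ultimately show ?thesis by (smt (verit) mult_nonpos_nonneg)
next
  case True
  define g where "g x = sin x * cosh x - cos x * sinh x" for x :: real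
  have g_pos: "g x > 0" if "0 < x" "x < pi/2" for x
  proof -
    have "\<exists>z>0. z < x \<and> g x - g 0 = (x - 0) * (2 * sin z * sinh z)"
      unfolding g_def
      by (rule MVT2) (use that in \<open>auto intro!: derivative_eq_intros simp: algebra_simps\<close>)
    then obtain z where z: "0 < z" "z < x" "g x - g 0 = x * (2 * sin z * sinh z)"
      by auto
    have "sin z > 0" using z that pi_gt3 by (intro sin_gt_zero) auto
    then show ?thesis using z that by (simp add: g_def)
  qed
  \<comment> \<open>\<open>g\<close> is minus the derivative of \<open>cos t * cosh t\<close>.\<close>
  have "\<exists>z>0. z < t \<and> cos t * cosh t - cos 0 * cosh 0 = (t - 0) * (- g z)"
    unfolding g_def
    by (rule MVT2) (use assms in \<open>auto intro!: derivative_eq_intros simp: algebra_simps\<close>)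
  then obtain z where z: "0 < z" "z < t" "cos t * cosh t - 1 = t * (- g z)"
    by auto
  have "g z > 0" using z True by (intro g_pos) auto
  then have "t * g z > 0" using z by simp
  then show ?thesis using z by linarith
qed

lemma first_root_cos_mult_cosh_exists:
  "\<exists>w::real. w > 0 \<and> cos w * cosh w = 1 \<and> (\<forall>v. 0 < v \<and> v < w \<longrightarrow> cos v * cosh v \<noteq> 1)"
proof -
  define Z where "Z = {4..2*pi} \<inter> {x. cos x * cosh x = 1}"
  have "compact Z"
    unfolding Z_def by (intro compact_Int_closed closed_Collect_eq continuous_intros) auto
  have "cos 4 * cosh (4::real) \<le> 1"
    using cos_mult_cosh_lt_1[of 4] by simp
  moreover have "1 \<le> cos (2*pi) * cosh (2*pi)"
    by (simp add: cosh_real_ge_1)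
  moreover have "continuous_on {4..2*pi} (\<lambda>x::real. cos x * cosh x)"
    by (intro continuous_intros)
  ultimately obtain x where "4 \<le> x" "x \<le> 2*pi" "cos x * cosh x = 1"
    using IVT'[of "\<lambda>x. cos x * cosh x" 4 1 "2*pi"] pi_gt3 by auto
  then have "Z \<noteq> {}" unfolding Z_def by auto
  then obtain w where w: "w \<in> Z" "\<And>z. z \<in> Z \<Longrightarrow> w \<le> z"
    using compact_attains_inf[OF \<open>compact Z\<close>] by auto
  have "cos v * cosh v \<noteq> 1" if "0 < v" "v < w" for v
  proof
    assume "cos v * cosh v = 1"
    then have "v \<in> Z"
      using that w(1) cos_mult_cosh_lt_1[of v] unfolding Z_def by force
    then show False using w(2) that by force
  qed
  with w(1) show ?thesis
    unfolding Z_def by (intro exI[of _ w]) auto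
qed

lemma omega1_first_root:
  shows omega1_pos: "omega1 > 0"
    and cos_mult_cosh_below_omega1: "\<And>v. 0 < v \<Longrightarrow> v < omega1 \<Longrightarrow> cos v * cosh v \<noteq> 1"
proof -
  let ?P = "\<lambda>w::real. w > 0 \<and> cos w * cosh w = 1 \<and> (\<forall>v. 0 < v \<and> v < w \<longrightarrow> cos v * cosh v \<noteq> 1)"
  have "\<exists>!w. ?P w"
  proof (rule ex_ex1I)
    show "\<exists>w. ?P w" by (rule first_root_cos_mult_cosh_exists)
    show "w = w'" if "?P w" "?P w'" for w w'
      using that by (cases w w' rule: linorder_cases) auto
  qed
  then have "?P omega1"
    unfolding omega1_def by (rule theI')
  then show "omega1 > 0" "\<And>v. 0 < v \<Longrightarrow> v < omega1 \<Longrightarrow> cos v * cosh v \<noteq> 1"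
    by auto
qed

section \<open>Calculus on the real line\<close>

lemma continuous_on_compose_UNIV:
  "continuous_on UNIV g \<Longrightarrow> continuous_on S f \<Longrightarrow> continuous_on S (\<lambda>x. g (f x))"
  by (rule continuous_on_compose2) auto

lemma continuous_on_divide_const [continuous_intros]:
  fixes f :: "'a::topological_space \<Rightarrow> 'b::real_normed_field"
  shows "continuous_on S f \<Longrightarrow> continuous_on S (\<lambda>x. f x / c)"
  unfolding divide_inverse by (intro continuous_intros)

lemma fundamental_theorem_of_calculus_real:
  fixes f f' :: "real \<Rightarrow> real"
  assumes "a \<le> b" "\<And>x. x \<in> {a..b} \<Longrightarrow> (f has_real_derivative f' x) (at x)"
  shows "(f' has_integral f b - f a) {a..b}"
  using assms by (intro fundamental_theorem_of_calculus)
    (auto simp: has_real_derivative_iff_has_vector_derivative[symmetric] intro: has_field_derivative_at_within)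

lemma has_real_derivative_imp_continuous_on:
  assumes "\<And>x. x \<in> A \<Longrightarrow> (f has_real_derivative f' x) (at x)"
  shows "continuous_on A f"
  by (rule DERIV_continuous_on) (rule has_field_derivative_at_within[OF assms])

lemma has_real_derivative_unique_on_open:
  assumes "(f has_real_derivative D) (at x)" "(g has_real_derivative E) (at x)"
    and "open U" "x \<in> U" "\<And>y. y \<in> U \<Longrightarrow> f y = g y"
  shows "D = E"
  using assms by (metis DERIV_unique has_field_derivative_transform_within_open)

lemma has_real_derivative_vanishes_outside:
  assumes "(f has_real_derivative D) (at x)" "\<And>y. y \<notin> {s..t} \<Longrightarrow> f y = 0" "x \<notin> {s..t}"
  shows "D = 0"
  using has_real_derivative_unique_on_open[OF assms(1) DERIV_const, of "- {s..t}"] assms(2,3) by auto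

lemma has_real_derivative_0_of_quadratic_bound:
  fixes f :: "real \<Rightarrow> real"
  assumes "\<And>y. \<bar>y\<bar> < 1 \<Longrightarrow> \<bar>f y - f 0\<bar> \<le> C * y\<^sup>2"
  shows "(f has_real_derivative 0) (at 0)"
proof -
  have "((\<lambda>y. (f y - f 0) / (y - 0)) \<longlongrightarrow> 0) (at 0)"
  proof (rule Lim_null_comparison)
    show "\<forall>\<^sub>F y in at 0. norm ((f y - f 0) / (y - 0)) \<le> \<bar>C\<bar> * \<bar>y\<bar>"
      unfolding eventually_at
    proof (intro exI[of _ 1] conjI ballI impI)
      fix y :: real assume "y \<noteq> 0 \<and> dist y 0 < 1"
      then have y: "y \<noteq> 0" "\<bar>y\<bar> < 1" by auto
      have "\<bar>f y - f 0\<bar> \<le> \<bar>C\<bar> * y\<^sup>2"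
        using assms[OF y(2)] by (smt (verit) abs_ge_self mult_right_mono zero_le_power2)
      then show "norm ((f y - f 0) / (y - 0)) \<le> \<bar>C\<bar> * \<bar>y\<bar>"
        using y by (simp add: abs_divide divide_le_eq power2_eq_square abs_mult mult.assoc)
    qed simp
    show "((\<lambda>y. \<bar>C\<bar> * \<bar>y\<bar>) \<longlongrightarrow> 0) (at 0)"
      by (intro tendsto_eq_intros) auto
  qed
  then show ?thesis
    by (simp add: has_field_derivative_iff)
qed

lemma has_real_derivative_max_0_power:
  assumes "n \<ge> 2"
  shows "((\<lambda>s. (max 0 s) ^ n) has_real_derivative of_nat n * (max 0 s) ^ (n - 1)) (at s)"
proof (cases s "0 :: real" rule: linorder_cases)
  case less
  have "((\<lambda>s. 0) has_real_derivative 0) (at s)" by simp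
  then have "((\<lambda>s. (max 0 s) ^ n) has_real_derivative 0) (at s)"
    by (rule has_field_derivative_transform_within_open[where S = "{..<0}"]) (use less assms in auto)
  then show ?thesis
    using less assms by (simp add: power_0_left)
next
  case equal
  have "\<bar>(max 0 y) ^ n\<bar> \<le> 1 * y\<^sup>2" if "\<bar>y\<bar> < 1" for y :: real
  proof -
    have "(max 0 y) ^ n \<le> (max 0 y)\<^sup>2"
      using that assms by (intro power_decreasing) auto
    also have "\<dots> \<le> y\<^sup>2"
      by (simp add: max_def)
    finally show ?thesis by simp
  qed
  then have "((\<lambda>s. (max 0 s) ^ n) has_real_derivative 0) (at 0)"
    by (intro has_real_derivative_0_of_quadratic_bound[where C = 1]) (use assms in \<open>auto simp: power_0_left\<close>)
  then show ?thesis
    using equal assms by (simp add: power_0_left)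
next
  case greater
  have "((\<lambda>s. s ^ n) has_real_derivative of_nat n * s ^ (n - 1)) (at s)"
    using DERIV_pow[of n s] by simp
  then have "((\<lambda>s. (max 0 s) ^ n) has_real_derivative of_nat n * s ^ (n - 1)) (at s)"
    by (rule has_field_derivative_transform_within_open[where S = "{0<..}"]) (use greater in auto)
  then show ?thesis
    using greater by simp
qed

lemma second_difference_taylor:
  fixes f f' f'' :: "real \<Rightarrow> real"
  assumes "\<And>t. (f has_real_derivative f' t) (at t)" "\<And>t. (f' has_real_derivative f'' t) (at t)"
    and "h > 0"
  obtains t\<^sub>1 t\<^sub>2 where "x < t\<^sub>1" "t\<^sub>1 < x + h" "x - h < t\<^sub>2" "t\<^sub>2 < x"
    "f (x + h) - 2 * f x + f (x - h) = h\<^sup>2 / 2 * (f'' t\<^sub>1 + f'' t\<^sub>2)"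
proof -
  define diff where "diff m = (if m = 0 then f else if m = 1 then f' else f'')" for m :: nat
  have diff: "\<forall>m t. m < 2 \<and> a \<le> t \<and> t \<le> b \<longrightarrow> (diff m has_real_derivative diff (Suc m) t) (at t)"
    for a b
    using assms(1,2) by (auto simp: diff_def less_2_cases_iff)
  obtain t\<^sub>1 where t\<^sub>1: "x < t\<^sub>1" "t\<^sub>1 < x + h"
    "f (x + h) = (\<Sum>m<2. diff m x / fact m * (x + h - x) ^ m) + diff 2 t\<^sub>1 / fact 2 * (x + h - x)\<^sup>2"
    using Taylor_up[of 2 diff f x "x + h" x, OF _ _ diff] assms(3) by (auto simp: diff_def)
  obtain t\<^sub>2 where t\<^sub>2: "x - h < t\<^sub>2" "t\<^sub>2 < x"
    "f (x - h) = (\<Sum>m<2. diff m x / fact m * (x - h - x) ^ m) + diff 2 t\<^sub>2 / fact 2 * (x - h - x)\<^sup>2"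
    using Taylor_down[of 2 diff f "x - h" x x, OF _ _ diff] assms(3) by (auto simp: diff_def)
  have "f (x + h) - 2 * f x + f (x - h) = h\<^sup>2 / 2 * (f'' t\<^sub>1 + f'' t\<^sub>2)"
    using t\<^sub>1(3) t\<^sub>2(3) by (simp add: diff_def numeral_2_eq_2 field_simps power2_eq_square)
  with t\<^sub>1 t\<^sub>2 show ?thesis
    using that by blast
qed

lemma integral_Icc_eq_subinterval:
  fixes F :: "real \<Rightarrow> real"
  assumes "{p..q} \<subseteq> {c..d}" "\<And>x. x \<in> {c..d} - {p..q} \<Longrightarrow> F x = 0"
  shows "integral {c..d} F = integral {p..q} F"
proof -
  have "integral {c..d} F = integral {c..d} (\<lambda>x. if x \<in> {p..q} then F x else 0)"
    using assms(2) by (intro integral_cong) auto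
  also have "\<dots> = integral ({p..q} \<inter> {c..d}) F"
    by (rule integral_restrict_Int)
  also have "{p..q} \<inter> {c..d} = {p..q}"
    using assms(1) by blast
  finally show ?thesis .
qed

lemma integral_shift_supported:
  fixes F :: "real \<Rightarrow> real"
  assumes "\<And>x. x \<notin> {p..q} \<Longrightarrow> F x = 0" "{p..q} \<subseteq> {c..d}" "{p - h..q - h} \<subseteq> {c..d}"
  shows "integral {c..d} (\<lambda>x. F (x + h)) = integral {c..d} F"
proof -
  have "integral {c..d} (\<lambda>x. F (x + h)) = integral {p - h..q - h} (\<lambda>x. F (x + h))"
    using assms by (intro integral_Icc_eq_subinterval) auto
  also have "\<dots> = integral {p - h..q - h} (F \<circ> (+) h)"
    by (simp add: o_def add.commute)
  also have "\<dots> = integral {p..q} F"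
    by (simp add: integral_shift_Icc_real)
  also have "\<dots> = integral {c..d} F"
    using assms by (intro integral_Icc_eq_subinterval[symmetric]) auto
  finally show ?thesis .
qed

lemma integral_second_difference:
  fixes g :: "real \<Rightarrow> real"
  assumes "continuous_on UNIV g" "\<And>x. x \<notin> {p..q} \<Longrightarrow> g x = 0"
    and "p \<le> q" "0 \<le> h" "c \<le> p - h" "q + h \<le> d"
  shows "integral {c..d} (\<lambda>x. (g (x + h) - 2 * g x + g (x - h)) * g x)
    = - integral {c..d} (\<lambda>x. (g (x + h) - g x)\<^sup>2)"
proof -
  define A where "A x = g (x + h) * g x" for x
  have cont: "continuous_on {c..d} (\<lambda>x. g (x + h))" "continuous_on {c..d} (\<lambda>x. g (x - h))"
    "continuous_on {c..d} g"
    by (intro continuous_on_compose_UNIV[OF assms(1)] continuous_intros)+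
  then have integrable: "A integrable_on {c..d}" "(\<lambda>x. (g x)\<^sup>2) integrable_on {c..d}"
    "(\<lambda>x. g (x - h) * g x) integrable_on {c..d}" "(\<lambda>x. (g (x + h))\<^sup>2) integrable_on {c..d}"
    unfolding A_def by (auto intro!: integrable_continuous_interval continuous_intros)
  have linear: "integral {c..d} (\<lambda>x. f\<^sub>1 x - 2 * f\<^sub>2 x + f\<^sub>3 x)
      = integral {c..d} f\<^sub>1 - 2 * integral {c..d} f\<^sub>2 + integral {c..d} f\<^sub>3"
    if "f\<^sub>1 integrable_on {c..d}" "f\<^sub>2 integrable_on {c..d}" "f\<^sub>3 integrable_on {c..d}"
    for f\<^sub>1 f\<^sub>2 f\<^sub>3 :: "real \<Rightarrow> real"
    using that by (simp add: integral_add integral_diff integrable_diff integrable_mult_right)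
  \<comment> \<open>Translation invariance of the integral turns both sides into \<open>2 \<integral>A - 2 \<integral>g\<^sup>2\<close>.\<close>
  have shift_A: "integral {c..d} (\<lambda>x. g (x - h) * g x) = integral {c..d} A"
  proof -
    have "integral {c..d} (\<lambda>x. g (x + h - h) * g (x + h)) = integral {c..d} (\<lambda>x. g (x - h) * g x)"
      using assms by (intro integral_shift_supported[where F = "\<lambda>x. g (x - h) * g x" and p = p and q = q]) auto
    then show ?thesis
      by (simp add: A_def[abs_def] mult.commute)
  qed
  have shift_square: "integral {c..d} (\<lambda>x. (g (x + h))\<^sup>2) = integral {c..d} (\<lambda>x. (g x)\<^sup>2)"
    using assms by (intro integral_shift_supported[where F = "\<lambda>x. (g x)\<^sup>2" and p = p and q = q]) auto
  have "integral {c..d} (\<lambda>x. (g (x + h) - 2 * g x + g (x - h)) * g x)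
      = integral {c..d} (\<lambda>x. A x - 2 * (g x)\<^sup>2 + g (x - h) * g x)"
    by (rule integral_cong) (simp add: A_def algebra_simps power2_eq_square)
  also have "\<dots> = 2 * integral {c..d} A - 2 * integral {c..d} (\<lambda>x. (g x)\<^sup>2)"
    using linear[OF integrable(1,2,3)] shift_A by simp
  also have "\<dots> = - integral {c..d} (\<lambda>x. (g (x + h))\<^sup>2 - 2 * A x + (g x)\<^sup>2)"
    using linear[OF integrable(4,1,2)] shift_square by simp
  also have "\<dots> = - integral {c..d} (\<lambda>x. (g (x + h) - g x)\<^sup>2)"
    by (rule arg_cong[where f = uminus], rule integral_cong) (simp add: A_def algebra_simps power2_eq_square)
  finally show ?thesis .
qed

lemma integral_by_parts_vanishing_boundary:
  fixes F F' G G' :: "real \<Rightarrow> real"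
  assumes "c \<le> d"
    and "\<And>x. x \<in> {c..d} \<Longrightarrow> (F has_real_derivative F' x) (at x)"
    and "\<And>x. x \<in> {c..d} \<Longrightarrow> (G has_real_derivative G' x) (at x)"
    and "continuous_on {c..d} F'" "continuous_on {c..d} G'" "F c = 0" "F d = 0"
  shows "integral {c..d} (\<lambda>x. F x * G' x) = - integral {c..d} (\<lambda>x. F' x * G x)"
proof -
  have "continuous_on {c..d} F" "continuous_on {c..d} G"
    by (rule has_real_derivative_imp_continuous_on, rule assms(2) assms(3), assumption)+
  then have "(\<lambda>x. F' x * G x) integrable_on {c..d}" "(\<lambda>x. F x * G' x) integrable_on {c..d}"
    using assms by (auto intro!: integrable_continuous_interval continuous_intros)
  then have "integral {c..d} (\<lambda>x. F' x * G x + F x * G' x)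
      = integral {c..d} (\<lambda>x. F' x * G x) + integral {c..d} (\<lambda>x. F x * G' x)"
    by (rule integral_add)
  moreover have "((\<lambda>x. F' x * G x + F x * G' x) has_integral F d * G d - F c * G c) {c..d}"
    by (rule fundamental_theorem_of_calculus_real) (use assms in \<open>auto intro!: derivative_eq_intros\<close>)
  then have "integral {c..d} (\<lambda>x. F' x * G x + F x * G' x) = 0"
    using assms(6,7) by (simp add: integral_unique)
  ultimately show ?thesis
    by linarith
qed

section \<open>One-dimensional inequalities via Picone identities\<close>

lemma integral_le_by_picone_identity:
  fixes S P Q R :: "real \<Rightarrow> real"
  assumes "s \<le> t"
    and S: "\<And>x. x \<in> {s..t} \<Longrightarrow> (S has_real_derivative P x - Q x - (R x)\<^sup>2) (at x)"
    and "S t = S s"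
    and "continuous_on {s..t} P" "continuous_on {s..t} Q" "continuous_on {s..t} R"
  shows "integral {s..t} Q \<le> integral {s..t} P"
proof -
  have "((\<lambda>x. P x - Q x - (R x)\<^sup>2) has_integral S t - S s) {s..t}"
    using \<open>s \<le> t\<close> S by (rule fundamental_theorem_of_calculus_real)
  then have "integral {s..t} (\<lambda>x. P x - Q x - (R x)\<^sup>2) = 0"
    using \<open>S t = S s\<close> by (simp add: integral_unique)
  moreover have "P integrable_on {s..t}" "Q integrable_on {s..t}" "(\<lambda>x. (R x)\<^sup>2) integrable_on {s..t}"
    using assms(4-6) by (auto intro!: integrable_continuous_interval continuous_intros)
  moreover have "integral {s..t} (\<lambda>x. (R x)\<^sup>2) \<ge> 0"
    using calculation(4) by (rule integral_nonneg) simp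
  ultimately show ?thesis
    by (simp add: integral_diff integrable_diff)
qed

lemma wirtinger_inequality_subinterval:
  fixes g g' :: "real \<Rightarrow> real"
  assumes "0 < s" "s \<le> t" "t < L"
    and g: "\<And>x. x \<in> {s..t} \<Longrightarrow> (g has_real_derivative g' x) (at x)"
    and "continuous_on {s..t} g'" and "g s = 0" "g t = 0"
  shows "(pi/L)\<^sup>2 * integral {s..t} (\<lambda>x. (g x)\<^sup>2) \<le> integral {s..t} (\<lambda>x. (g' x)\<^sup>2)"
proof -
  define \<nu> where "\<nu> = pi / L"
  have cont_g: "continuous_on {s..t} g"
    using g by (rule has_real_derivative_imp_continuous_on)
  have sin_pos: "sin (\<nu> * x) > 0" if "x \<in> {s..t}" for x
    using that assms by (intro sin_gt_zero) (auto simp: \<nu>_def field_simps)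
  \<comment> \<open>Picone's identity for the positive solution \<open>sin (\<nu> x)\<close> of \<open>y'' + \<nu>\<^sup>2 y = 0\<close>.\<close>
  define cot where "cot x = \<nu> * cos (\<nu> * x) / sin (\<nu> * x)" for x
  have "integral {s..t} (\<lambda>x. \<nu>\<^sup>2 * (g x)\<^sup>2) \<le> integral {s..t} (\<lambda>x. (g' x)\<^sup>2)"
  proof (rule integral_le_by_picone_identity
      [where S = "\<lambda>x. cot x * (g x)\<^sup>2" and R = "\<lambda>x. g' x - cot x * g x"])
    fix x assume x: "x \<in> {s..t}"
    have "sin (\<nu> * x) \<noteq> 0" using sin_pos[OF x] by simp
    moreover have "(cos (\<nu> * x))\<^sup>2 = 1 - (sin (\<nu> * x))\<^sup>2"
      by (simp add: cos_squared_eq)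
    ultimately show "((\<lambda>x. cot x * (g x)\<^sup>2) has_real_derivative
        (g' x)\<^sup>2 - \<nu>\<^sup>2 * (g x)\<^sup>2 - (g' x - cot x * g x)\<^sup>2) (at x)"
      unfolding cot_def
      by (auto intro!: derivative_eq_intros g x) (simp add: field_simps power2_eq_square)
  next
    show "continuous_on {s..t} (\<lambda>x. g' x - cot x * g x)"
      using sin_pos cont_g \<open>continuous_on {s..t} g'\<close>
      unfolding cot_def by (auto intro!: continuous_intros simp: less_imp_neq[symmetric])
  qed (use assms cont_g in \<open>auto intro!: continuous_intros\<close>)
  then show ?thesis
    by (simp add: \<nu>_def)
qed

definition krylov :: "real \<Rightarrow> nat \<Rightarrow> real \<Rightarrow> real" where
  "krylov m k x = m ^ k *
     (case k mod 4 of
        0 \<Rightarrow> cosh (m * x) - cos (m * x)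
      | Suc 0 \<Rightarrow> sinh (m * x) + sin (m * x)
      | Suc (Suc 0) \<Rightarrow> cosh (m * x) + cos (m * x)
      | _ \<Rightarrow> sinh (m * x) - sin (m * x))"

lemma has_real_derivative_krylov: "(krylov m k has_real_derivative krylov m (Suc k) x) (at x)"
proof -
  have "k mod 4 < 4" by simp
  then consider "k mod 4 = 0" | "k mod 4 = 1" | "k mod 4 = 2" | "k mod 4 = 3"
    by linarith
  then show ?thesis
    by cases (auto simp: krylov_def[abs_def] mod_Suc intro!: derivative_eq_intros simp: algebra_simps)
qed

lemma krylov_add_4: "krylov m (k + 4) x = m ^ 4 * krylov m k x"
  by (simp add: krylov_def power_add)

lemma krylov_wronskian:
  "krylov m 0 x * krylov m 4 x - krylov m 3 x * krylov m 1 x = 2 * m ^ 4 * (1 - cos (m * x) * cosh (m * x))"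
proof -
  have "krylov m 0 x * krylov m 4 x - krylov m 3 x * krylov m 1 x
      = m ^ 4 * (((cosh (m * x))\<^sup>2 - (sinh (m * x))\<^sup>2) + ((sin (m * x))\<^sup>2 + (cos (m * x))\<^sup>2)
          - 2 * cos (m * x) * cosh (m * x))"
    by (simp add: krylov_def power2_eq_square power_numeral_reduce algebra_simps
        del: sin_cos_squared_add sin_cos_squared_add2 sin_cos_squared_add3)
  then show ?thesis
    by (simp only: hyperbolic_pythagoras sin_cos_squared_add) (simp add: algebra_simps)
qed

lemma krylov_conserved:
  "krylov m 3 x * krylov m 3 x - krylov m 0 x * krylov m 6 x
     + krylov m 1 x * krylov m 5 x - krylov m 4 x * krylov m 2 x = 0"
proof -
  have "krylov m 3 x * krylov m 3 x - krylov m 0 x * krylov m 6 x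
      + krylov m 1 x * krylov m 5 x - krylov m 4 x * krylov m 2 x
      = 2 * m ^ 6 * (((sin (m * x))\<^sup>2 + (cos (m * x))\<^sup>2) - ((cosh (m * x))\<^sup>2 - (sinh (m * x))\<^sup>2))"
    by (simp add: krylov_def power2_eq_square power_numeral_reduce algebra_simps
        del: sin_cos_squared_add sin_cos_squared_add2 sin_cos_squared_add3)
  then show ?thesis
    by (simp only: hyperbolic_pythagoras sin_cos_squared_add) (simp add: algebra_simps)
qed

lemma beam_picone_identity:
  fixes \<phi> \<psi> :: "nat \<Rightarrow> real \<Rightarrow> real"
  assumes \<phi>: "\<And>k x. (\<phi> k has_real_derivative \<phi> (Suc k) x) (at x)" "\<phi> 4 x = m ^ 4 * \<phi> 0 x"
    and \<psi>: "\<And>k x. (\<psi> k has_real_derivative \<psi> (Suc k) x) (at x)" "\<psi> 4 x = m ^ 4 * \<psi> 0 x"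
    and conserved: "\<psi> 0 x * \<phi> 3 x - \<phi> 0 x * \<psi> 3 x + \<phi> 1 x * \<psi> 2 x - \<psi> 1 x * \<phi> 2 x = 0"
    and f: "(f has_real_derivative f' x) (at x)" "(f' has_real_derivative f'' x) (at x)"
    and c: "(c\<^sub>1 has_real_derivative D\<^sub>1) (at x)" "(c\<^sub>2 has_real_derivative D\<^sub>2) (at x)"
    and U: "open U" "x \<in> U"
      "\<And>y. y \<in> U \<Longrightarrow> f y = c\<^sub>1 y * \<phi> 0 y + c\<^sub>2 y * \<psi> 0 y"
      "\<And>y. y \<in> U \<Longrightarrow> f' y = c\<^sub>1 y * \<phi> 1 y + c\<^sub>2 y * \<psi> 1 y"
  shows "((\<lambda>x. f' x * (c\<^sub>1 x * \<phi> 2 x + c\<^sub>2 x * \<psi> 2 x) - f x * (c\<^sub>1 x * \<phi> 3 x + c\<^sub>2 x * \<psi> 3 x))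
      has_real_derivative (f'' x)\<^sup>2 - m ^ 4 * (f x)\<^sup>2 - (f'' x - (c\<^sub>1 x * \<phi> 2 x + c\<^sub>2 x * \<psi> 2 x))\<^sup>2) (at x)"
proof (rule DERIV_cong)
  show "((\<lambda>x. f' x * (c\<^sub>1 x * \<phi> 2 x + c\<^sub>2 x * \<psi> 2 x) - f x * (c\<^sub>1 x * \<phi> 3 x + c\<^sub>2 x * \<psi> 3 x))
      has_real_derivative
        f'' x * (c\<^sub>1 x * \<phi> 2 x + c\<^sub>2 x * \<psi> 2 x)
        + f' x * (D\<^sub>1 * \<phi> 2 x + c\<^sub>1 x * \<phi> 3 x + (D\<^sub>2 * \<psi> 2 x + c\<^sub>2 x * \<psi> 3 x))
        - (f' x * (c\<^sub>1 x * \<phi> 3 x + c\<^sub>2 x * \<psi> 3 x)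
           + f x * (D\<^sub>1 * \<phi> 3 x + c\<^sub>1 x * \<phi> 4 x + (D\<^sub>2 * \<psi> 3 x + c\<^sub>2 x * \<psi> 4 x)))) (at x)"
    by (auto intro!: derivative_eq_intros f c \<phi>(1) \<psi>(1) simp: eval_nat_numeral algebra_simps)
  have "f' x = D\<^sub>1 * \<phi> 0 x + c\<^sub>1 x * \<phi> 1 x + (D\<^sub>2 * \<psi> 0 x + c\<^sub>2 x * \<psi> 1 x)"
    by (rule has_real_derivative_unique_on_open[OF f(1) _ U(1,2,3)])
      (auto intro!: derivative_eq_intros c \<phi>(1) \<psi>(1))
  moreover have "f'' x = D\<^sub>1 * \<phi> 1 x + c\<^sub>1 x * \<phi> 2 x + (D\<^sub>2 * \<psi> 1 x + c\<^sub>2 x * \<psi> 2 x)"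
    by (rule has_real_derivative_unique_on_open[OF f(2) _ U(1,2,4)])
      (auto intro!: derivative_eq_intros c \<phi>(1) \<psi>(1) simp: eval_nat_numeral)
  ultimately show "f'' x * (c\<^sub>1 x * \<phi> 2 x + c\<^sub>2 x * \<psi> 2 x)
        + f' x * (D\<^sub>1 * \<phi> 2 x + c\<^sub>1 x * \<phi> 3 x + (D\<^sub>2 * \<psi> 2 x + c\<^sub>2 x * \<psi> 3 x))
        - (f' x * (c\<^sub>1 x * \<phi> 3 x + c\<^sub>2 x * \<psi> 3 x)
           + f x * (D\<^sub>1 * \<phi> 3 x + c\<^sub>1 x * \<phi> 4 x + (D\<^sub>2 * \<psi> 3 x + c\<^sub>2 x * \<psi> 4 x)))
      = (f'' x)\<^sup>2 - m ^ 4 * (f x)\<^sup>2 - (f'' x - (c\<^sub>1 x * \<phi> 2 x + c\<^sub>2 x * \<psi> 2 x))\<^sup>2"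
    using U(3,4)[OF U(2)] conserved \<phi>(2) \<psi>(2) by algebra
qed

lemma clamped_beam_inequality_of_solution_pair:
  fixes f f' f'' :: "real \<Rightarrow> real" and \<phi> \<psi> :: "nat \<Rightarrow> real \<Rightarrow> real"
  assumes "s \<le> t"
    and \<phi>: "\<And>k x. (\<phi> k has_real_derivative \<phi> (Suc k) x) (at x)" "\<And>x. \<phi> 4 x = m ^ 4 * \<phi> 0 x"
    and \<psi>: "\<And>k x. (\<psi> k has_real_derivative \<psi> (Suc k) x) (at x)" "\<And>x. \<psi> 4 x = m ^ 4 * \<psi> 0 x"
    and conserved: "\<And>x. \<psi> 0 x * \<phi> 3 x - \<phi> 0 x * \<psi> 3 x + \<phi> 1 x * \<psi> 2 x - \<psi> 1 x * \<phi> 2 x = 0"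
    and wronskian: "\<And>x. x \<in> {s..t} \<Longrightarrow> \<phi> 0 x * \<psi> 1 x - \<psi> 0 x * \<phi> 1 x \<noteq> 0"
    and f: "\<And>x. x \<in> {s..t} \<Longrightarrow> (f has_real_derivative f' x) (at x)"
      "\<And>x. x \<in> {s..t} \<Longrightarrow> (f' has_real_derivative f'' x) (at x)"
      "continuous_on {s..t} f''"
    and boundary: "f s = 0" "f' s = 0" "f t = 0" "f' t = 0"
  shows "m ^ 4 * integral {s..t} (\<lambda>x. (f x)\<^sup>2) \<le> integral {s..t} (\<lambda>x. (f'' x)\<^sup>2)"
proof -
  have cont: "continuous_on A (\<phi> k)" "continuous_on A (\<psi> k)" for A k
    by (rule has_real_derivative_imp_continuous_on, rule \<phi>(1) \<psi>(1))+
  define W where "W x = \<phi> 0 x * \<psi> 1 x - \<psi> 0 x * \<phi> 1 x" for x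
  define U where "U = {x. W x \<noteq> 0}"
  have "open U" "{s..t} \<subseteq> U"
    using wronskian unfolding U_def W_def by (auto intro!: open_Collect_neq continuous_intros cont)
  \<comment> \<open>Variation of constants: \<open>f = c\<^sub>1 \<phi>\<^sub>0 + c\<^sub>2 \<psi>\<^sub>0\<close> and \<open>f' = c\<^sub>1 \<phi>\<^sub>1 + c\<^sub>2 \<psi>\<^sub>1\<close> wherever \<open>W \<noteq> 0\<close>.\<close>
  define c\<^sub>1 where "c\<^sub>1 x = (f x * \<psi> 1 x - f' x * \<psi> 0 x) / W x" for x
  define c\<^sub>2 where "c\<^sub>2 x = (f' x * \<phi> 0 x - f x * \<phi> 1 x) / W x" for x
  have f_eq: "f x = c\<^sub>1 x * \<phi> 0 x + c\<^sub>2 x * \<psi> 0 x" and f'_eq: "f' x = c\<^sub>1 x * \<phi> 1 x + c\<^sub>2 x * \<psi> 1 x"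
    if "x \<in> U" for x
    using that by (auto simp: U_def c\<^sub>1_def c\<^sub>2_def field_simps) (simp_all add: W_def algebra_simps)
  define G where "G x = c\<^sub>1 x * \<phi> 2 x + c\<^sub>2 x * \<psi> 2 x" for x
  define S where "S x = f' x * G x - f x * (c\<^sub>1 x * \<phi> 3 x + c\<^sub>2 x * \<psi> 3 x)" for x
  have "integral {s..t} (\<lambda>x. m ^ 4 * (f x)\<^sup>2) \<le> integral {s..t} (\<lambda>x. (f'' x)\<^sup>2)"
  proof (rule integral_le_by_picone_identity[where S = S and R = "\<lambda>x. f'' x - G x"])
    fix x assume x: "x \<in> {s..t}"
    then have "x \<in> U" "W x \<noteq> 0"
      using \<open>{s..t} \<subseteq> U\<close> by (auto simp: U_def)
    have "\<exists>D. (c\<^sub>1 has_real_derivative D) (at x)" "\<exists>D. (c\<^sub>2 has_real_derivative D) (at x)"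
      unfolding c\<^sub>1_def[abs_def] c\<^sub>2_def[abs_def] W_def using \<open>W x \<noteq> 0\<close>
      by (auto intro!: exI derivative_eq_intros f x \<phi>(1) \<psi>(1) simp: W_def)
    then obtain D\<^sub>1 D\<^sub>2 where D: "(c\<^sub>1 has_real_derivative D\<^sub>1) (at x)" "(c\<^sub>2 has_real_derivative D\<^sub>2) (at x)"
      by blast
    show "(S has_real_derivative (f'' x)\<^sup>2 - m ^ 4 * (f x)\<^sup>2 - (f'' x - G x)\<^sup>2) (at x)"
      unfolding S_def[abs_def] G_def
      by (rule beam_picone_identity[where D\<^sub>1 = D\<^sub>1 and D\<^sub>2 = D\<^sub>2 and U = U])
        (fact \<phi> \<psi> conserved f(1)[OF x] f(2)[OF x] D \<open>open U\<close> \<open>x \<in> U\<close> f_eq f'_eq)+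
  next
    have "continuous_on {s..t} f" "continuous_on {s..t} f'"
      by (rule has_real_derivative_imp_continuous_on, rule f(1) f(2), assumption)+
    then have "continuous_on {s..t} c\<^sub>1" "continuous_on {s..t} c\<^sub>2"
      using \<open>{s..t} \<subseteq> U\<close> unfolding c\<^sub>1_def c\<^sub>2_def U_def
      by (auto intro!: continuous_intros cont simp: W_def)
    then show "continuous_on {s..t} (\<lambda>x. f'' x - G x)"
      unfolding G_def by (intro continuous_intros cont f(3))
  qed (use assms in \<open>auto intro!: continuous_intros has_real_derivative_imp_continuous_on[OF f(1)] simp: S_def\<close>)
  then show ?thesis
    by (simp add: integral_mult_right)
qed

lemma clamped_beam_inequality_subinterval:
  fixes f f' f'' :: "real \<Rightarrow> real"
  assumes "0 < s" "s \<le> t" "m > 0" "m * t < omega1"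
    and f: "\<And>x. x \<in> {s..t} \<Longrightarrow> (f has_real_derivative f' x) (at x)"
      "\<And>x. x \<in> {s..t} \<Longrightarrow> (f' has_real_derivative f'' x) (at x)"
      "continuous_on {s..t} f''"
    and boundary: "f s = 0" "f' s = 0" "f t = 0" "f' t = 0"
  shows "m ^ 4 * integral {s..t} (\<lambda>x. (f x)\<^sup>2) \<le> integral {s..t} (\<lambda>x. (f'' x)\<^sup>2)"
proof (rule clamped_beam_inequality_of_solution_pair[where \<phi> = "krylov m" and \<psi> = "\<lambda>k. krylov m (k + 3)"])
  fix k :: nat and x :: real
  show "(krylov m k has_real_derivative krylov m (Suc k) x) (at x)"
    by (rule has_real_derivative_krylov)
  show "(krylov m (k + 3) has_real_derivative krylov m (Suc k + 3) x) (at x)"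
    using has_real_derivative_krylov[of m "k + 3"] by simp
  show "krylov m 4 x = m ^ 4 * krylov m 0 x" "krylov m (4 + 3) x = m ^ 4 * krylov m (0 + 3) x"
    using krylov_add_4[of m 0] krylov_add_4[of m 3] by simp_all
  show "krylov m (0 + 3) x * krylov m 3 x - krylov m 0 x * krylov m (3 + 3) x
      + krylov m 1 x * krylov m (2 + 3) x - krylov m (1 + 3) x * krylov m 2 x = 0"
    using krylov_conserved[of m x] by simp
next
  fix x :: real assume "x \<in> {s..t}"
  then have "m * x > 0" "m * x < omega1"
    using assms by (auto intro: le_less_trans[OF mult_left_mono])
  then have "cos (m * x) * cosh (m * x) \<noteq> 1"
    by (rule cos_mult_cosh_below_omega1)
  then have "krylov m 0 x * krylov m 4 x - krylov m 3 x * krylov m 1 x \<noteq> 0"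
    unfolding krylov_wronskian using \<open>m > 0\<close> by simp
  then show "krylov m 0 x * krylov m (1 + 3) x - krylov m (0 + 3) x * krylov m 1 x \<noteq> 0"
    by simp
qed (fact assms f boundary)+

lemma wirtinger_inequality:
  fixes g g' :: "real \<Rightarrow> real"
  assumes "0 < s" "s \<le> t" "t < L"
    and g: "\<And>x. (g has_real_derivative g' x) (at x)" and "continuous_on UNIV g'"
    and supp: "\<And>x. x \<notin> {s..t} \<Longrightarrow> g x = 0"
  shows "(pi/L)\<^sup>2 * integral {0..L} (\<lambda>x. (g x)\<^sup>2) \<le> integral {0..L} (\<lambda>x. (g' x)\<^sup>2)"
proof -
  have g'_supp: "g' x = 0" if "x \<notin> {s..t}" for x
    using has_real_derivative_vanishes_outside[OF g supp that] .
  \<comment> \<open>Enlarge the support so that the boundary values vanish.\<close>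
  have "(pi/L)\<^sup>2 * integral {s/2..(t+L)/2} (\<lambda>x. (g x)\<^sup>2) \<le> integral {s/2..(t+L)/2} (\<lambda>x. (g' x)\<^sup>2)"
    using assms by (intro wirtinger_inequality_subinterval g continuous_on_subset[OF \<open>continuous_on UNIV g'\<close>]) auto
  moreover have "integral {0..L} (\<lambda>x. (g x)\<^sup>2) = integral {s/2..(t+L)/2} (\<lambda>x. (g x)\<^sup>2)"
    "integral {0..L} (\<lambda>x. (g' x)\<^sup>2) = integral {s/2..(t+L)/2} (\<lambda>x. (g' x)\<^sup>2)"
    using assms g'_supp by (auto intro!: integral_Icc_eq_subinterval)
  ultimately show ?thesis by simp
qed

lemma clamped_beam_inequality:
  fixes f f' f'' :: "real \<Rightarrow> real"
  assumes "0 < s" "s \<le> t" "t < L"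
    and f: "\<And>x. (f has_real_derivative f' x) (at x)" "\<And>x. (f' has_real_derivative f'' x) (at x)"
      "continuous_on UNIV f''"
    and supp: "\<And>x. x \<notin> {s..t} \<Longrightarrow> f x = 0"
  shows "(omega1/L) ^ 4 * integral {0..L} (\<lambda>x. (f x)\<^sup>2) \<le> integral {0..L} (\<lambda>x. (f'' x)\<^sup>2)"
proof -
  have f'_supp: "f' x = 0" if "x \<notin> {s..t}" for x
    using has_real_derivative_vanishes_outside[OF f(1) supp that] .
  have f''_supp: "f'' x = 0" if "x \<notin> {s..t}" for x
    using has_real_derivative_vanishes_outside[OF f(2) f'_supp that] .
  have "(omega1/L) * ((t+L)/2) < omega1"
    using assms omega1_pos by (simp add: field_simps)
  moreover have "f (s/2) = 0" "f' (s/2) = 0" "f ((t+L)/2) = 0" "f' ((t+L)/2) = 0"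
    using assms by (auto intro!: supp f'_supp)
  ultimately have "(omega1/L) ^ 4 * integral {s/2..(t+L)/2} (\<lambda>x. (f x)\<^sup>2)
      \<le> integral {s/2..(t+L)/2} (\<lambda>x. (f'' x)\<^sup>2)"
    using assms omega1_pos continuous_on_subset[OF f(3)]
    by (intro clamped_beam_inequality_subinterval[OF _ _ _ _ f(1,2)]) auto
  moreover have "integral {0..L} (\<lambda>x. (f x)\<^sup>2) = integral {s/2..(t+L)/2} (\<lambda>x. (f x)\<^sup>2)"
    "integral {0..L} (\<lambda>x. (f'' x)\<^sup>2) = integral {s/2..(t+L)/2} (\<lambda>x. (f'' x)\<^sup>2)"
    using assms supp f''_supp by (auto intro!: integral_Icc_eq_subinterval)
  ultimately show ?thesis by simp
qed

section \<open>Functions on the plane\<close>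

lemma integral_cbox_eq_iterated_x:
  fixes g :: "real \<times> real \<Rightarrow> real"
  assumes "continuous_on UNIV g"
  shows "integral (cbox (a, c) (b, d)) g = integral {a..b} (\<lambda>x. integral {c..d} (\<lambda>y. g (x, y)))"
  using integral_prod_continuous[of a c b d g] continuous_on_subset[OF assms] by simp

lemma integral_cbox_eq_iterated_y:
  fixes g :: "real \<times> real \<Rightarrow> real"
  assumes "continuous_on UNIV g"
  shows "integral (cbox (a, c) (b, d)) g = integral {c..d} (\<lambda>y. integral {a..b} (\<lambda>x. g (x, y)))"
  using integral_cbox_eq_iterated_x[OF assms]
    integral_swap_continuous[of a c b d "\<lambda>x y. g (x, y)"] continuous_on_subset[OF assms]
  by simp

lemma integral_cbox_eq_by_iterated_x:
  fixes g\<^sub>1 g\<^sub>2 :: "real \<times> real \<Rightarrow> real"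
  assumes "continuous_on UNIV g\<^sub>1" "continuous_on UNIV g\<^sub>2"
    and "\<And>x. x \<in> {a..b} \<Longrightarrow> integral {c..d} (\<lambda>y. g\<^sub>1 (x, y)) = integral {c..d} (\<lambda>y. g\<^sub>2 (x, y))"
  shows "integral (cbox (a, c) (b, d)) g\<^sub>1 = integral (cbox (a, c) (b, d)) g\<^sub>2"
  unfolding integral_cbox_eq_iterated_x[OF assms(1)] integral_cbox_eq_iterated_x[OF assms(2)]
  by (rule integral_cong) (rule assms(3))

lemma integral_cbox_eq_by_iterated_y:
  fixes g\<^sub>1 g\<^sub>2 :: "real \<times> real \<Rightarrow> real"
  assumes "continuous_on UNIV g\<^sub>1" "continuous_on UNIV g\<^sub>2"
    and "\<And>y. y \<in> {c..d} \<Longrightarrow> integral {a..b} (\<lambda>x. g\<^sub>1 (x, y)) = integral {a..b} (\<lambda>x. g\<^sub>2 (x, y))"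
  shows "integral (cbox (a, c) (b, d)) g\<^sub>1 = integral (cbox (a, c) (b, d)) g\<^sub>2"
  unfolding integral_cbox_eq_iterated_y[OF assms(1)] integral_cbox_eq_iterated_y[OF assms(2)]
  by (rule integral_cong) (rule assms(3))

lemma integral_cbox_le_iterated_x:
  fixes g\<^sub>1 g\<^sub>2 :: "real \<times> real \<Rightarrow> real"
  assumes "continuous_on UNIV g\<^sub>1" "continuous_on UNIV g\<^sub>2"
    and "\<And>x. x \<in> {a..b} \<Longrightarrow> integral {c..d} (\<lambda>y. g\<^sub>1 (x, y)) \<le> integral {c..d} (\<lambda>y. g\<^sub>2 (x, y))"
  shows "integral (cbox (a, c) (b, d)) g\<^sub>1 \<le> integral (cbox (a, c) (b, d)) g\<^sub>2"
proof -
  have integrable: "(\<lambda>x. integral {c..d} (\<lambda>y. g (x, y))) integrable_on {a..b}"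
    if "continuous_on UNIV g" for g :: "real \<times> real \<Rightarrow> real"
    using integral_integrable_2dim[of a c b d g] continuous_on_subset[OF that] by simp
  show ?thesis
    unfolding integral_cbox_eq_iterated_x[OF assms(1)] integral_cbox_eq_iterated_x[OF assms(2)]
    by (rule integral_le[OF integrable[OF assms(1)] integrable[OF assms(2)]]) (use assms(3) in auto)
qed

lemma integral_cbox_le_iterated_y:
  fixes g\<^sub>1 g\<^sub>2 :: "real \<times> real \<Rightarrow> real"
  assumes "continuous_on UNIV g\<^sub>1" "continuous_on UNIV g\<^sub>2"
    and "\<And>y. y \<in> {c..d} \<Longrightarrow> integral {a..b} (\<lambda>x. g\<^sub>1 (x, y)) \<le> integral {a..b} (\<lambda>x. g\<^sub>2 (x, y))"
  shows "integral (cbox (a, c) (b, d)) g\<^sub>1 \<le> integral (cbox (a, c) (b, d)) g\<^sub>2"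
proof -
  have integrable: "(\<lambda>y. integral {a..b} (\<lambda>x. g (x, y))) integrable_on {c..d}"
    if "continuous_on UNIV g" for g :: "real \<times> real \<Rightarrow> real"
  proof -
    have "continuous_on UNIV (\<lambda>p. g (snd p, fst p))"
      by (intro continuous_on_compose_UNIV[OF that] continuous_intros)
    then show ?thesis
      using integral_integrable_2dim[of c a d b "\<lambda>p. g (snd p, fst p)"] continuous_on_subset by force
  qed
  show ?thesis
    unfolding integral_cbox_eq_iterated_y[OF assms(1)] integral_cbox_eq_iterated_y[OF assms(2)]
    by (rule integral_le[OF integrable[OF assms(1)] integrable[OF assms(2)]]) (use assms(3) in auto)
qed

lemma has_cont_partials_has_real_derivative:
  assumes "has_cont_partials u"
  shows has_real_derivative_px: "((\<lambda>t. u (t, y)) has_real_derivative px u (x, y)) (at x)"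
    and has_real_derivative_py: "((\<lambda>t. u (x, t)) has_real_derivative py u (x, y)) (at y)"
  using assms unfolding has_cont_partials_def px_def py_def
  by (metis DERIV_deriv_iff_real_differentiable fst_conv snd_conv)+

lemma C2_continuous:
  assumes "C2 u"
  shows "continuous_on UNIV u" "continuous_on UNIV (px u)" "continuous_on UNIV (py u)"
    "continuous_on UNIV (px (px u))" "continuous_on UNIV (py (py u))"
  using assms unfolding C2_def has_cont_partials_def by auto

definition shift_x :: "real \<Rightarrow> (real \<times> real \<Rightarrow> real) \<Rightarrow> real \<times> real \<Rightarrow> real" where
  "shift_x h g p = g (fst p + h, snd p)"

lemma shift_x_Pair [simp]: "shift_x h g (x, y) = g (x + h, y)"
  by (simp add: shift_x_def)

lemma continuous_on_shift_x: "continuous_on UNIV g \<Longrightarrow> continuous_on S (shift_x h g)"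
  unfolding shift_x_def by (rule continuous_on_compose_UNIV) (auto intro!: continuous_intros)

lemma uniform_limit_at_right_0_by_nearby_values:
  fixes Q :: "real \<Rightarrow> 'a::euclidean_space \<Rightarrow> real"
  assumes "continuous_on UNIV v" "compact S"
    and "\<And>h p. 0 < h \<Longrightarrow> h < 1 \<Longrightarrow> p \<in> S \<Longrightarrow>
      \<exists>q\<^sub>1 q\<^sub>2. dist q\<^sub>1 p < h \<and> dist q\<^sub>2 p < h \<and> Q h p = (v q\<^sub>1 + v q\<^sub>2) / 2"
  shows "uniform_limit S Q v (at_right 0)"
  unfolding uniform_limit_iff
proof (intro allI impI)
  fix e :: real assume "e > 0"
  define T where "T = (\<Union>p\<in>S. \<Union>z\<in>cball 0 1. {p + z})"
  have "compact T"
    unfolding T_def using assms(2) by (intro compact_sums') auto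
  then have "uniformly_continuous_on T v"
    using assms(1) by (intro compact_uniformly_continuous) (auto intro: continuous_on_subset)
  then obtain d where d: "d > 0" "\<And>p q. p \<in> T \<Longrightarrow> q \<in> T \<Longrightarrow> dist q p < d \<Longrightarrow> dist (v q) (v p) < e"
    unfolding uniformly_continuous_on_def using \<open>e > 0\<close> by metis
  have near: "q \<in> T" "p \<in> T" if "p \<in> S" "dist q p < 1" for p q
  proof -
    have "q - p \<in> cball 0 1"
      using that by (simp add: dist_norm norm_minus_commute)
    show "q \<in> T"
      unfolding T_def by (rule UN_I[OF \<open>p \<in> S\<close> UN_I[OF \<open>q - p \<in> cball 0 1\<close>]]) simp
    show "p \<in> T"
      unfolding T_def by (rule UN_I[OF \<open>p \<in> S\<close>], rule UN_I[of 0]) simp_all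
  qed
  show "\<forall>\<^sub>F h in at_right 0. \<forall>p\<in>S. dist (Q h p) (v p) < e"
    unfolding eventually_at_right_field
  proof (intro exI[of _ "min d 1"] conjI allI impI ballI)
    fix h p assume h: "0 < h" "h < min d 1" and "p \<in> S"
    then obtain q\<^sub>1 q\<^sub>2 where q: "dist q\<^sub>1 p < h" "dist q\<^sub>2 p < h" "Q h p = (v q\<^sub>1 + v q\<^sub>2) / 2"
      using assms(3)[of h p] by auto
    have "q\<^sub>1 \<in> T" "q\<^sub>2 \<in> T" "p \<in> T"
      using near[OF \<open>p \<in> S\<close>] q h by auto
    then have "dist (v q\<^sub>1) (v p) < e" "dist (v q\<^sub>2) (v p) < e"
      using d(2) q h by auto
    then show "dist (Q h p) (v p) < e"
      unfolding q(3) by (simp add: dist_real_def abs_less_iff field_simps)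
  qed (use d(1) in simp)
qed

lemma uniform_limit_difference_quotient_x:
  assumes "has_cont_partials u" "compact S"
  shows "uniform_limit S (\<lambda>h p. (shift_x h u p - u p) / h) (px u) (at_right 0)"
proof (rule uniform_limit_at_right_0_by_nearby_values)
  show "continuous_on UNIV (px u)"
    using assms(1) by (simp add: has_cont_partials_def)
  fix h :: real and p :: "real \<times> real" assume h: "0 < h"
  obtain x y where p: "p = (x, y)" by fastforce
  have "\<exists>z>x. z < x + h \<and> u (x + h, y) - u (x, y) = (x + h - x) * px u (z, y)"
    using h by (intro MVT2) (auto intro: has_real_derivative_px[OF assms(1)])
  then obtain z where "x < z" "z < x + h" "(shift_x h u p - u p) / h = px u (z, y)"
    using h p by auto
  then show "\<exists>q\<^sub>1 q\<^sub>2. dist q\<^sub>1 p < h \<and> dist q\<^sub>2 p < h \<and> (shift_x h u p - u p) / h = (px u q\<^sub>1 + px u q\<^sub>2) / 2"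
    using p by (intro exI[of _ "(z, y)"]) (auto simp: dist_Pair_Pair dist_real_def)
qed (use assms in simp)

lemma uniform_limit_second_difference_quotient_x:
  assumes "has_cont_partials u" "has_cont_partials (px u)" "compact S"
  shows "uniform_limit S (\<lambda>h p. (shift_x h u p - 2 * u p + shift_x (-h) u p) / h\<^sup>2) (px (px u)) (at_right 0)"
proof (rule uniform_limit_at_right_0_by_nearby_values)
  show "continuous_on UNIV (px (px u))"
    using assms(2) by (simp add: has_cont_partials_def)
  fix h :: real and p :: "real \<times> real" assume h: "0 < h"
  obtain x y where p: "p = (x, y)" by fastforce
  obtain t\<^sub>1 t\<^sub>2 where t: "x < t\<^sub>1" "t\<^sub>1 < x + h" "x - h < t\<^sub>2" "t\<^sub>2 < x"
    "u (x + h, y) - 2 * u (x, y) + u (x - h, y) = h\<^sup>2 / 2 * (px (px u) (t\<^sub>1, y) + px (px u) (t\<^sub>2, y))"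
    using second_difference_taylor[of "\<lambda>t. u (t, y)" "\<lambda>t. px u (t, y)" "\<lambda>t. px (px u) (t, y)" h x] h
      has_real_derivative_px[OF assms(1)] has_real_derivative_px[OF assms(2)]
    by blast
  then have "(shift_x h u p - 2 * u p + shift_x (-h) u p) / h\<^sup>2 = (px (px u) (t\<^sub>1, y) + px (px u) (t\<^sub>2, y)) / 2"
    using h p by simp
  with t show "\<exists>q\<^sub>1 q\<^sub>2. dist q\<^sub>1 p < h \<and> dist q\<^sub>2 p < h \<and>
      (shift_x h u p - 2 * u p + shift_x (-h) u p) / h\<^sup>2 = (px (px u) q\<^sub>1 + px (px u) q\<^sub>2) / 2"
    using p by (intro exI[of _ "(t\<^sub>1, y)"] exI[of _ "(t\<^sub>2, y)"]) (auto simp: dist_Pair_Pair dist_real_def)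
qed (use assms in simp)

lemma bounded_continuous_image_cbox: "continuous_on UNIV g \<Longrightarrow> bounded (g ` cbox a b)"
  by (rule compact_imp_bounded, rule compact_continuous_image) (auto intro: continuous_on_subset)

lemma integral_tendsto_of_uniform_limit:
  fixes f :: "'a \<Rightarrow> 'b::euclidean_space \<Rightarrow> real"
  assumes "uniform_limit (cbox a b) f g F" "\<And>n. continuous_on (cbox a b) (f n)" "F \<noteq> bot"
  shows "((\<lambda>n. integral (cbox a b) (f n)) \<longlongrightarrow> integral (cbox a b) g) F"
proof -
  obtain I J where "\<And>n. (f n has_integral I n) (cbox a b)" "(g has_integral J) (cbox a b)" "(I \<longlongrightarrow> J) F"
    using uniform_limit_integral_cbox[OF assms] by blast
  moreover from this have "(\<lambda>n. integral (cbox a b) (f n)) = I" "integral (cbox a b) g = J"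
    by (auto intro: integral_unique)
  ultimately show ?thesis
    by simp
qed

lemma compact_subset_open_rectangle:
  fixes K :: "(real \<times> real) set"
  assumes "compact K" "K \<noteq> {}" "K \<subseteq> {0<..<a} \<times> {0<..<b}"
  obtains x\<^sub>0 x\<^sub>1 y\<^sub>0 y\<^sub>1 where "0 < x\<^sub>0" "x\<^sub>0 \<le> x\<^sub>1" "x\<^sub>1 < a" "0 < y\<^sub>0" "y\<^sub>0 \<le> y\<^sub>1" "y\<^sub>1 < b"
    "K \<subseteq> {x\<^sub>0..x\<^sub>1} \<times> {y\<^sub>0..y\<^sub>1}"
proof -
  have compact: "compact (fst ` K)" "compact (snd ` K)"
    using assms(1) by (auto intro!: compact_continuous_image continuous_intros)
  have nonempty: "fst ` K \<noteq> {}" "snd ` K \<noteq> {}"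
    using assms(2) by auto
  obtain x\<^sub>0 where x\<^sub>0: "x\<^sub>0 \<in> fst ` K" "\<forall>x \<in> fst ` K. x\<^sub>0 \<le> x"
    using compact_attains_inf[OF compact(1) nonempty(1)] by blast
  obtain x\<^sub>1 where x\<^sub>1: "x\<^sub>1 \<in> fst ` K" "\<forall>x \<in> fst ` K. x \<le> x\<^sub>1"
    using compact_attains_sup[OF compact(1) nonempty(1)] by blast
  obtain y\<^sub>0 where y\<^sub>0: "y\<^sub>0 \<in> snd ` K" "\<forall>y \<in> snd ` K. y\<^sub>0 \<le> y"
    using compact_attains_inf[OF compact(2) nonempty(2)] by blast
  obtain y\<^sub>1 where y\<^sub>1: "y\<^sub>1 \<in> snd ` K" "\<forall>y \<in> snd ` K. y \<le> y\<^sub>1"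
    using compact_attains_sup[OF compact(2) nonempty(2)] by blast
  have "x\<^sub>0 \<in> {0<..<a}" "x\<^sub>1 \<in> {0<..<a}" "y\<^sub>0 \<in> {0<..<b}" "y\<^sub>1 \<in> {0<..<b}"
    using assms(3) x\<^sub>0(1) x\<^sub>1(1) y\<^sub>0(1) y\<^sub>1(1) by (auto simp: subset_iff)
  moreover have "x\<^sub>0 \<le> x\<^sub>1" "y\<^sub>0 \<le> y\<^sub>1"
    using x\<^sub>0 x\<^sub>1 y\<^sub>0 y\<^sub>1 by auto
  moreover have "K \<subseteq> {x\<^sub>0..x\<^sub>1} \<times> {y\<^sub>0..y\<^sub>1}"
  proof
    fix p assume "p \<in> K"
    then have "fst p \<in> fst ` K" "snd p \<in> snd ` K" by auto
    then show "p \<in> {x\<^sub>0..x\<^sub>1} \<times> {y\<^sub>0..y\<^sub>1}"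
      using x\<^sub>0(2) x\<^sub>1(2) y\<^sub>0(2) y\<^sub>1(2) by (auto simp: mem_Times_iff)
  qed
  ultimately show ?thesis
    using that by simp
qed

section \<open>C2 functions supported in a rectangle\<close>

locale supported_in_rectangle =
  fixes u :: "real \<times> real \<Rightarrow> real" and a b x\<^sub>0 x\<^sub>1 y\<^sub>0 y\<^sub>1 :: real
  assumes C2: "C2 u"
    and rectangle: "0 < x\<^sub>0" "x\<^sub>0 \<le> x\<^sub>1" "x\<^sub>1 < a" "0 < y\<^sub>0" "y\<^sub>0 \<le> y\<^sub>1" "y\<^sub>1 < b"
    and support: "\<And>x y. (x, y) \<notin> {x\<^sub>0..x\<^sub>1} \<times> {y\<^sub>0..y\<^sub>1} \<Longrightarrow> u (x, y) = 0"
begin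

lemmas cont = C2_continuous[OF C2]

lemma partials: "has_cont_partials u" "has_cont_partials (px u)" "has_cont_partials (py u)"
  using C2 by (simp_all add: C2_def)

lemma py_outside:
  assumes "x \<notin> {x\<^sub>0..x\<^sub>1}"
  shows "py u (x, y) = 0"
proof -
  have "(\<lambda>t. u (x, t)) = (\<lambda>t. 0)"
    using support assms by auto
  then show ?thesis by (simp add: py_def)
qed

lemma clamped_beam_inequality_x:
  "(omega1/a) ^ 4 * integral (cbox (0, 0) (a, b)) (\<lambda>p. (u p)\<^sup>2)
     \<le> integral (cbox (0, 0) (a, b)) (\<lambda>p. (px (px u) p)\<^sup>2)"
proof -
  have "integral (cbox (0, 0) (a, b)) (\<lambda>p. (omega1/a) ^ 4 * (u p)\<^sup>2)
      \<le> integral (cbox (0, 0) (a, b)) (\<lambda>p. (px (px u) p)\<^sup>2)"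
  proof (rule integral_cbox_le_iterated_y)
    fix y
    have "(omega1/a) ^ 4 * integral {0..a} (\<lambda>x. (u (x, y))\<^sup>2) \<le> integral {0..a} (\<lambda>x. (px (px u) (x, y))\<^sup>2)"
      using rectangle support
      by (intro clamped_beam_inequality[of x\<^sub>0 x\<^sub>1 a "\<lambda>x. u (x, y)" "\<lambda>x. px u (x, y)"]
          has_real_derivative_px partials continuous_on_compose_UNIV[OF cont(4)]
          continuous_intros) auto
    then show "integral {0..a} (\<lambda>x. (omega1/a) ^ 4 * (u (x, y))\<^sup>2) \<le> integral {0..a} (\<lambda>x. (px (px u) (x, y))\<^sup>2)"
      by simp
  qed (auto intro!: continuous_intros cont)
  then show ?thesis by simp
qed

lemma clamped_beam_inequality_y:
  "(omega1/b) ^ 4 * integral (cbox (0, 0) (a, b)) (\<lambda>p. (u p)\<^sup>2)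
     \<le> integral (cbox (0, 0) (a, b)) (\<lambda>p. (py (py u) p)\<^sup>2)"
proof -
  have "integral (cbox (0, 0) (a, b)) (\<lambda>p. (omega1/b) ^ 4 * (u p)\<^sup>2)
      \<le> integral (cbox (0, 0) (a, b)) (\<lambda>p. (py (py u) p)\<^sup>2)"
  proof (rule integral_cbox_le_iterated_x)
    fix x
    have "(omega1/b) ^ 4 * integral {0..b} (\<lambda>y. (u (x, y))\<^sup>2) \<le> integral {0..b} (\<lambda>y. (py (py u) (x, y))\<^sup>2)"
      using rectangle support
      by (intro clamped_beam_inequality[of y\<^sub>0 y\<^sub>1 b "\<lambda>y. u (x, y)" "\<lambda>y. py u (x, y)"]
          has_real_derivative_py partials continuous_on_compose_UNIV[OF cont(5)]
          continuous_intros) auto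
    then show "integral {0..b} (\<lambda>y. (omega1/b) ^ 4 * (u (x, y))\<^sup>2) \<le> integral {0..b} (\<lambda>y. (py (py u) (x, y))\<^sup>2)"
      by simp
  qed (auto intro!: continuous_intros cont)
  then show ?thesis by simp
qed

lemma wirtinger_inequality_x:
  "(pi/a)\<^sup>2 * integral (cbox (0, 0) (a, b)) (\<lambda>p. (u p)\<^sup>2)
     \<le> integral (cbox (0, 0) (a, b)) (\<lambda>p. (px u p)\<^sup>2)"
proof -
  have "integral (cbox (0, 0) (a, b)) (\<lambda>p. (pi/a)\<^sup>2 * (u p)\<^sup>2)
      \<le> integral (cbox (0, 0) (a, b)) (\<lambda>p. (px u p)\<^sup>2)"
  proof (rule integral_cbox_le_iterated_y)
    fix y
    have "(pi/a)\<^sup>2 * integral {0..a} (\<lambda>x. (u (x, y))\<^sup>2) \<le> integral {0..a} (\<lambda>x. (px u (x, y))\<^sup>2)"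
      using rectangle support
      by (intro wirtinger_inequality[of x\<^sub>0 x\<^sub>1 a "\<lambda>x. u (x, y)"]
          has_real_derivative_px partials continuous_on_compose_UNIV[OF cont(2)]
          continuous_intros) auto
    then show "integral {0..a} (\<lambda>x. (pi/a)\<^sup>2 * (u (x, y))\<^sup>2) \<le> integral {0..a} (\<lambda>x. (px u (x, y))\<^sup>2)"
      by simp
  qed (auto intro!: continuous_intros cont)
  then show ?thesis by simp
qed

lemma integral_second_difference_mult_pyy:
  assumes "0 < h" "h \<le> x\<^sub>0" "x\<^sub>1 + h \<le> a"
  shows "integral (cbox (0, 0) (a, b)) (\<lambda>p. (shift_x h u p - 2 * u p + shift_x (-h) u p) * py (py u) p)
    = integral (cbox (0, 0) (a, b)) (\<lambda>p. (shift_x h (py u) p - py u p)\<^sup>2)"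
proof -
  have cont_shift: "continuous_on UNIV (shift_x h g)" if "continuous_on UNIV g" for g h
    using that by (rule continuous_on_shift_x)
  \<comment> \<open>Integrate by parts in \<open>y\<close>, then sum by parts in \<open>x\<close>.\<close>
  have "integral (cbox (0, 0) (a, b)) (\<lambda>p. (shift_x h u p - 2 * u p + shift_x (-h) u p) * py (py u) p)
      = integral (cbox (0, 0) (a, b))
          (\<lambda>p. - ((shift_x h (py u) p - 2 * py u p + shift_x (-h) (py u) p) * py u p))"
  proof (rule integral_cbox_eq_by_iterated_x)
    fix x
    show "integral {0..b} (\<lambda>y. (shift_x h u (x, y) - 2 * u (x, y) + shift_x (-h) u (x, y)) * py (py u) (x, y))
      = integral {0..b} (\<lambda>y. - ((shift_x h (py u) (x, y) - 2 * py u (x, y) + shift_x (-h) (py u) (x, y)) * py u (x, y)))"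
      unfolding integral_neg shift_x_Pair
    proof (rule integral_by_parts_vanishing_boundary)
      fix y
      show "((\<lambda>y. u (x + h, y) - 2 * u (x, y) + u (x + - h, y)) has_real_derivative
          py u (x + h, y) - 2 * py u (x, y) + py u (x + - h, y)) (at y)"
        by (auto intro!: derivative_eq_intros has_real_derivative_py partials)
      show "((\<lambda>y. py u (x, y)) has_real_derivative py (py u) (x, y)) (at y)"
        by (intro has_real_derivative_py partials)
    qed (use rectangle support in
        \<open>auto intro!: continuous_intros continuous_on_compose_UNIV[OF cont(3)]
          continuous_on_compose_UNIV[OF cont(5)]\<close>)
  qed (auto intro!: continuous_intros cont_shift cont)
  also have "\<dots> = integral (cbox (0, 0) (a, b)) (\<lambda>p. (shift_x h (py u) p - py u p)\<^sup>2)"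
  proof (rule integral_cbox_eq_by_iterated_y)
    fix y
    have "integral {0..a} (\<lambda>x. (py u (x + h, y) - 2 * py u (x, y) + py u (x - h, y)) * py u (x, y))
        = - integral {0..a} (\<lambda>x. (py u (x + h, y) - py u (x, y))\<^sup>2)"
      using rectangle assms py_outside
      by (intro integral_second_difference[where p = x\<^sub>0 and q = x\<^sub>1]
          continuous_on_compose_UNIV[OF cont(3)] continuous_intros) auto
    then show "integral {0..a} (\<lambda>x. - ((shift_x h (py u) (x, y) - 2 * py u (x, y) + shift_x (-h) (py u) (x, y)) * py u (x, y)))
      = integral {0..a} (\<lambda>x. (shift_x h (py u) (x, y) - py u (x, y))\<^sup>2)"
      by simp
  qed (auto intro!: continuous_intros cont_shift cont)
  finally show ?thesis .
qed

lemma wirtinger_inequality_difference_y: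
  "(pi/b)\<^sup>2 * integral (cbox (0, 0) (a, b)) (\<lambda>p. (shift_x h u p - u p)\<^sup>2)
    \<le> integral (cbox (0, 0) (a, b)) (\<lambda>p. (shift_x h (py u) p - py u p)\<^sup>2)"
proof -
  have "integral (cbox (0, 0) (a, b)) (\<lambda>p. (pi/b)\<^sup>2 * (shift_x h u p - u p)\<^sup>2)
      \<le> integral (cbox (0, 0) (a, b)) (\<lambda>p. (shift_x h (py u) p - py u p)\<^sup>2)"
  proof (rule integral_cbox_le_iterated_x)
    fix x
    have "(pi/b)\<^sup>2 * integral {0..b} (\<lambda>y. (u (x + h, y) - u (x, y))\<^sup>2)
        \<le> integral {0..b} (\<lambda>y. (py u (x + h, y) - py u (x, y))\<^sup>2)"
      using rectangle support
      by (intro wirtinger_inequality[of y\<^sub>0 y\<^sub>1 b "\<lambda>y. u (x + h, y) - u (x, y)"]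
          derivative_intros has_real_derivative_py partials continuous_intros
          continuous_on_compose_UNIV[OF cont(3)]) auto
    then show "integral {0..b} (\<lambda>y. (pi/b)\<^sup>2 * (shift_x h u (x, y) - u (x, y))\<^sup>2)
        \<le> integral {0..b} (\<lambda>y. (shift_x h (py u) (x, y) - py u (x, y))\<^sup>2)"
      by simp
  qed (auto intro!: continuous_intros continuous_on_shift_x cont)
  then show ?thesis by simp
qed

lemma tendsto_integral_difference_quotient_squared:
  "((\<lambda>h. integral (cbox (0, 0) (a, b)) (\<lambda>p. ((shift_x h u p - u p) / h)\<^sup>2))
     \<longlongrightarrow> integral (cbox (0, 0) (a, b)) (\<lambda>p. (px u p)\<^sup>2)) (at_right 0)"
  unfolding power2_eq_square
proof (rule integral_tendsto_of_uniform_limit)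
  show "uniform_limit (cbox (0, 0) (a, b)) (\<lambda>h p. (shift_x h u p - u p) / h * ((shift_x h u p - u p) / h))
      (\<lambda>p. px u p * px u p) (at_right 0)"
    using uniform_limit_difference_quotient_x[OF partials(1) compact_cbox]
      bounded_continuous_image_cbox[OF cont(2), of "(0, 0)" "(a, b)"]
    by (intro uniform_lim_mult)
qed (auto intro!: continuous_intros continuous_on_shift_x continuous_on_subset[OF cont(1)])

lemma tendsto_integral_second_difference_quotient_mult_pyy:
  "((\<lambda>h. integral (cbox (0, 0) (a, b)) (\<lambda>p. (shift_x h u p - 2 * u p + shift_x (-h) u p) / h\<^sup>2 * py (py u) p))
     \<longlongrightarrow> integral (cbox (0, 0) (a, b)) (\<lambda>p. px (px u) p * py (py u) p)) (at_right 0)"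
proof (rule integral_tendsto_of_uniform_limit)
  show "uniform_limit (cbox (0, 0) (a, b))
      (\<lambda>h p. (shift_x h u p - 2 * u p + shift_x (-h) u p) / h\<^sup>2 * py (py u) p)
      (\<lambda>p. px (px u) p * py (py u) p) (at_right 0)"
    by (rule uniform_lim_mult[OF uniform_limit_second_difference_quotient_x[OF partials(1,2) compact_cbox]
          uniform_limit_const bounded_continuous_image_cbox[OF cont(4)] bounded_continuous_image_cbox[OF cont(5)]])
qed (auto intro!: continuous_intros continuous_on_shift_x continuous_on_subset[OF cont(1)]
    continuous_on_subset[OF cont(5)])

lemma integral_px_squared_le_mixed:
  "(pi/b)\<^sup>2 * integral (cbox (0, 0) (a, b)) (\<lambda>p. (px u p)\<^sup>2)
    \<le> integral (cbox (0, 0) (a, b)) (\<lambda>p. px (px u) p * py (py u) p)"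
proof (rule tendsto_le[OF trivial_limit_at_right_real tendsto_integral_second_difference_quotient_mult_pyy
      tendsto_mult_left[OF tendsto_integral_difference_quotient_squared]])
  show "\<forall>\<^sub>F h in at_right 0.
      (pi/b)\<^sup>2 * integral (cbox (0, 0) (a, b)) (\<lambda>p. ((shift_x h u p - u p) / h)\<^sup>2)
      \<le> integral (cbox (0, 0) (a, b)) (\<lambda>p. (shift_x h u p - 2 * u p + shift_x (-h) u p) / h\<^sup>2 * py (py u) p)"
    unfolding eventually_at_right_field
  proof (intro exI[of _ "min x\<^sub>0 (a - x\<^sub>1)"] conjI allI impI)
    show "min x\<^sub>0 (a - x\<^sub>1) > 0" using rectangle by simp
    fix h :: real assume h: "0 < h" "h < min x\<^sub>0 (a - x\<^sub>1)"
    have "(pi/b)\<^sup>2 * integral (cbox (0, 0) (a, b)) (\<lambda>p. ((shift_x h u p - u p) / h)\<^sup>2)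
        = (pi/b)\<^sup>2 * integral (cbox (0, 0) (a, b)) (\<lambda>p. (shift_x h u p - u p)\<^sup>2) / h\<^sup>2"
      by (simp add: power_divide)
    also have "\<dots> \<le> integral (cbox (0, 0) (a, b)) (\<lambda>p. (shift_x h (py u) p - py u p)\<^sup>2) / h\<^sup>2"
      using wirtinger_inequality_difference_y[of h] by (simp add: divide_right_mono)
    also have "\<dots> = integral (cbox (0, 0) (a, b))
        (\<lambda>p. (shift_x h u p - 2 * u p + shift_x (-h) u p) * py (py u) p) / h\<^sup>2"
      using integral_second_difference_mult_pyy[of h] h by simp
    also have "\<dots> = integral (cbox (0, 0) (a, b))
        (\<lambda>p. (shift_x h u p - 2 * u p + shift_x (-h) u p) / h\<^sup>2 * py (py u) p)"
      by simp
    finally show "(pi/b)\<^sup>2 * integral (cbox (0, 0) (a, b)) (\<lambda>p. ((shift_x h u p - u p) / h)\<^sup>2)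
        \<le> integral (cbox (0, 0) (a, b)) (\<lambda>p. (shift_x h u p - 2 * u p + shift_x (-h) u p) / h\<^sup>2 * py (py u) p)" .
  qed
qed

lemma integral_laplacian_squared_ge:
  "((omega1/a) ^ 4 + (omega1/b) ^ 4 + 2 * (pi/a)\<^sup>2 * (pi/b)\<^sup>2) * integral (cbox (0, 0) (a, b)) (\<lambda>p. (u p)\<^sup>2)
    \<le> integral (cbox (0, 0) (a, b)) (\<lambda>p. (laplacian u p)\<^sup>2)"
proof -
  let ?I = "integral (cbox (0, 0) (a, b))"
  have integrable: "g integrable_on cbox (0, 0) (a, b)" if "continuous_on UNIV g" for g :: "real \<times> real \<Rightarrow> real"
    using that by (auto intro: integrable_continuous continuous_on_subset)
  have "?I (\<lambda>p. (laplacian u p)\<^sup>2)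
      = ?I (\<lambda>p. (px (px u) p)\<^sup>2 + 2 * (px (px u) p * py (py u) p) + (py (py u) p)\<^sup>2)"
    unfolding laplacian_def by (rule integral_cong) (simp add: power2_eq_square algebra_simps)
  also have "\<dots> = ?I (\<lambda>p. (px (px u) p)\<^sup>2) + 2 * ?I (\<lambda>p. px (px u) p * py (py u) p) + ?I (\<lambda>p. (py (py u) p)\<^sup>2)"
    by (simp add: integral_add integrable cont continuous_intros)
  finally have "?I (\<lambda>p. (laplacian u p)\<^sup>2)
      = ?I (\<lambda>p. (px (px u) p)\<^sup>2) + 2 * ?I (\<lambda>p. px (px u) p * py (py u) p) + ?I (\<lambda>p. (py (py u) p)\<^sup>2)" .
  moreover have "(pi/b)\<^sup>2 * ((pi/a)\<^sup>2 * ?I (\<lambda>p. (u p)\<^sup>2)) \<le> (pi/b)\<^sup>2 * ?I (\<lambda>p. (px u p)\<^sup>2)"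
    using wirtinger_inequality_x by (rule mult_left_mono) simp
  ultimately show ?thesis
    using clamped_beam_inequality_x clamped_beam_inequality_y integral_px_squared_le_mixed
    by (simp add: algebra_simps)
qed

lemma integral_square_pos:
  assumes "u p \<noteq> 0"
  shows "integral (cbox (0, 0) (a, b)) (\<lambda>p. (u p)\<^sup>2) > 0"
proof -
  have cont_square: "continuous_on (cbox (0, 0) (a, b)) (\<lambda>p. (u p)\<^sup>2)"
    by (intro continuous_intros continuous_on_subset[OF cont(1)]) simp
  have "p \<in> {x\<^sub>0..x\<^sub>1} \<times> {y\<^sub>0..y\<^sub>1}"
    using support[of "fst p" "snd p"] assms by auto
  then have p: "p \<in> cbox (0, 0) (a, b)"
    using rectangle by (auto simp: cbox_Pair_eq mem_Times_iff)
  have nonempty: "box (0, 0) (a, b) \<noteq> {}"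
    using rectangle by (auto simp: box_ne_empty inner_Pair_0 Basis_prod_def)
  have "integral (cbox (0, 0) (a, b)) (\<lambda>p. (u p)\<^sup>2) \<noteq> 0"
  proof
    assume "integral (cbox (0, 0) (a, b)) (\<lambda>p. (u p)\<^sup>2) = 0"
    then have zero: "((\<lambda>p. (u p)\<^sup>2) has_integral 0) (cbox (0, 0) (a, b))"
      using integrable_integral[OF integrable_continuous[OF cont_square]] by simp
    have "(\<lambda>p. (u p)\<^sup>2) p = 0"
      by (rule has_integral_0_cbox_imp_0[OF cont_square _ zero nonempty p]) simp
    with assms show False
      by simp
  qed
  moreover have "integral (cbox (0, 0) (a, b)) (\<lambda>p. (u p)\<^sup>2) \<ge> 0"
    using integrable_continuous[OF cont_square] by (rule integral_nonneg) simp
  ultimately show ?thesis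
    by linarith
qed

end

section \<open>An admissible function\<close>

definition bump :: "real \<Rightarrow> real \<Rightarrow> real \<Rightarrow> real" where
  "bump \<alpha> \<beta> t = (max 0 ((t - \<alpha>) * (\<beta> - t))) ^ 3"

lemma bump_twice_continuously_differentiable:
  "\<exists>b' b''. (\<forall>t. (bump \<alpha> \<beta> has_real_derivative b' t) (at t))
    \<and> (\<forall>t. (b' has_real_derivative b'' t) (at t)) \<and> continuous_on UNIV b''"
proof (intro exI conjI allI)
  define q where "q t = (t - \<alpha>) * (\<beta> - t)" for t
  have q: "(q has_real_derivative \<alpha> + \<beta> - 2 * t) (at t)" for t
    unfolding q_def by (auto intro!: derivative_eq_intros)
  show "(bump \<alpha> \<beta> has_real_derivative 3 * (max 0 (q t))\<^sup>2 * (\<alpha> + \<beta> - 2 * t)) (at t)" for t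
    unfolding bump_def[abs_def] q_def[symmetric]
    using DERIV_chain2[OF has_real_derivative_max_0_power[of 3] q] by (simp add: mult.commute)
  show "((\<lambda>t. 3 * (max 0 (q t))\<^sup>2 * (\<alpha> + \<beta> - 2 * t)) has_real_derivative
      6 * max 0 (q t) * (\<alpha> + \<beta> - 2 * t)\<^sup>2 - 6 * (max 0 (q t))\<^sup>2) (at t)" for t
  proof -
    have "((\<lambda>t. (max 0 (q t))\<^sup>2) has_real_derivative 2 * max 0 (q t) * (\<alpha> + \<beta> - 2 * t)) (at t)"
      using DERIV_chain2[OF has_real_derivative_max_0_power[of 2] q] by simp
    moreover have "((\<lambda>t. \<alpha> + \<beta> - 2 * t) has_real_derivative - 2) (at t)"
      by (auto intro!: derivative_eq_intros)
    ultimately show ?thesis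
      by (rule DERIV_cong[OF DERIV_mult[OF DERIV_cmult]]) (simp add: power2_eq_square algebra_simps)
  qed
  show "continuous_on UNIV (\<lambda>t. 6 * max 0 (q t) * (\<alpha> + \<beta> - 2 * t)\<^sup>2 - 6 * (max 0 (q t))\<^sup>2)"
    unfolding q_def by (intro continuous_intros)
qed

lemma bump_eq_0:
  assumes "\<alpha> \<le> \<beta>" "t \<notin> {\<alpha><..<\<beta>}"
  shows "bump \<alpha> \<beta> t = 0"
proof -
  have "(t - \<alpha>) * (\<beta> - t) \<le> 0"
    using assms by (cases "t \<le> \<alpha>") (auto intro: mult_nonpos_nonneg mult_nonneg_nonpos)
  then show ?thesis
    by (simp add: bump_def)
qed

lemma bump_midpoint_pos:
  assumes "\<alpha> < \<beta>"
  shows "bump \<alpha> \<beta> ((\<alpha> + \<beta>) / 2) > 0"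
proof -
  have "((\<alpha> + \<beta>) / 2 - \<alpha>) * (\<beta> - (\<alpha> + \<beta>) / 2) = ((\<beta> - \<alpha>) / 2)\<^sup>2"
    by (simp add: field_simps power2_eq_square)
  also have "\<dots> > 0"
    using assms by simp
  finally show ?thesis
    by (simp add: bump_def)
qed

lemma px_tensor:
  assumes "\<And>t. (F has_real_derivative F' t) (at t)"
  shows "px (\<lambda>p. F (fst p) * G (snd p)) = (\<lambda>p. F' (fst p) * G (snd p))"
proof
  fix p :: "real \<times> real"
  have "((\<lambda>t. F t * G (snd p)) has_real_derivative F' (fst p) * G (snd p)) (at (fst p))"
    by (auto intro!: derivative_eq_intros assms)
  then show "px (\<lambda>p. F (fst p) * G (snd p)) p = F' (fst p) * G (snd p)"
    unfolding px_def by (simp add: DERIV_imp_deriv)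
qed

lemma py_tensor:
  assumes "\<And>t. (G has_real_derivative G' t) (at t)"
  shows "py (\<lambda>p. F (fst p) * G (snd p)) = (\<lambda>p. F (fst p) * G' (snd p))"
proof
  fix p :: "real \<times> real"
  have "((\<lambda>t. F (fst p) * G t) has_real_derivative F (fst p) * G' (snd p)) (at (snd p))"
    by (auto intro!: derivative_eq_intros assms)
  then show "py (\<lambda>p. F (fst p) * G (snd p)) p = F (fst p) * G' (snd p)"
    unfolding py_def by (simp add: DERIV_imp_deriv)
qed

lemma continuous_on_tensor:
  fixes F G :: "real \<Rightarrow> real"
  assumes "continuous_on UNIV F" "continuous_on UNIV G"
  shows "continuous_on UNIV (\<lambda>p. F (fst p) * G (snd p))"
  by (intro continuous_intros continuous_on_compose_UNIV[OF assms(1)] continuous_on_compose_UNIV[OF assms(2)])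

lemma has_cont_partials_tensor:
  assumes F: "\<And>t. (F has_real_derivative F' t) (at t)" "continuous_on UNIV F'"
    and G: "\<And>t. (G has_real_derivative G' t) (at t)" "continuous_on UNIV G'"
  shows "has_cont_partials (\<lambda>p. F (fst p) * G (snd p))"
proof -
  have "F differentiable (at x)" "G differentiable (at x)" for x
    using F(1) G(1) unfolding real_differentiable_def by blast+
  moreover have "continuous_on UNIV (\<lambda>p. F' (fst p) * G (snd p))" "continuous_on UNIV (\<lambda>p. F (fst p) * G' (snd p))"
    using F G has_real_derivative_imp_continuous_on[OF F(1)] has_real_derivative_imp_continuous_on[OF G(1)]
    by (simp_all add: continuous_on_tensor)
  ultimately show ?thesis
    unfolding has_cont_partials_def px_tensor[OF F(1)] py_tensor[OF G(1)] by simp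
qed

lemma C2_tensor:
  assumes F: "\<And>t. (F has_real_derivative F' t) (at t)" "\<And>t. (F' has_real_derivative F'' t) (at t)"
      "continuous_on UNIV F''"
    and G: "\<And>t. (G has_real_derivative G' t) (at t)" "\<And>t. (G' has_real_derivative G'' t) (at t)"
      "continuous_on UNIV G''"
  shows "C2 (\<lambda>p. F (fst p) * G (snd p))"
proof -
  have continuous: "continuous_on UNIV F" "continuous_on UNIV F'" "continuous_on UNIV G" "continuous_on UNIV G'"
    by (rule has_real_derivative_imp_continuous_on, rule F(1,2) G(1,2))+
  have "has_cont_partials (\<lambda>p. F (fst p) * G (snd p))"
    "has_cont_partials (\<lambda>p. F' (fst p) * G (snd p))" "has_cont_partials (\<lambda>p. F (fst p) * G' (snd p))"
    using has_cont_partials_tensor[OF F(1) continuous(2) G(1) continuous(4)]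
      has_cont_partials_tensor[OF F(2,3) G(1) continuous(4)]
      has_cont_partials_tensor[OF F(1) continuous(2) G(2,3)] .
  moreover have "continuous_on UNIV (\<lambda>p. F (fst p) * G (snd p))"
    using continuous by (simp add: continuous_on_tensor)
  ultimately show ?thesis
    unfolding C2_def px_tensor[OF F(1)] py_tensor[OF G(1)] by simp
qed

lemma C2c_rect_nontrivial:
  assumes "a > 0"
  shows "\<exists>u \<in> C2c (rect a). \<exists>p. u p \<noteq> 0"
proof -
  define b where "b = 1 / a"
  have "b > 0" using assms by (simp add: b_def)
  define u where "u p = bump (a/4) (3*a/4) (fst p) * bump (b/4) (3*b/4) (snd p)" for p
  obtain A' A'' where A: "\<And>t. (bump (a/4) (3*a/4) has_real_derivative A' t) (at t)"
    "\<And>t. (A' has_real_derivative A'' t) (at t)" "continuous_on UNIV A''"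
    using bump_twice_continuously_differentiable[of "a/4" "3*a/4"] by blast
  obtain B' B'' where B: "\<And>t. (bump (b/4) (3*b/4) has_real_derivative B' t) (at t)"
    "\<And>t. (B' has_real_derivative B'' t) (at t)" "continuous_on UNIV B''"
    using bump_twice_continuously_differentiable[of "b/4" "3*b/4"] by blast
  have "C2 u"
    unfolding u_def[abs_def] by (rule C2_tensor[OF A B])
  moreover have "compact (cbox (a/4, b/4) (3*a/4, 3*b/4))"
    by (rule compact_cbox)
  moreover have "cbox (a/4, b/4) (3*a/4, 3*b/4) \<subseteq> rect a"
  proof -
    have "cbox (a/4, b/4) (3*a/4, 3*b/4) = {a/4..3*a/4} \<times> {b/4..3*b/4}"
      by (simp add: cbox_Pair_eq)
    also have "\<dots> \<subseteq> {0<..<a} \<times> {0<..<b}"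
      using assms \<open>b > 0\<close> by auto
    finally show ?thesis
      unfolding rect_def b_def .
  qed
  moreover have "u p = 0" if "p \<notin> cbox (a/4, b/4) (3*a/4, 3*b/4)" for p
  proof -
    have "fst p \<notin> {a/4<..<3*a/4} \<or> snd p \<notin> {b/4<..<3*b/4}"
      using that by (cases p) (auto simp: cbox_Pair_eq)
    then show ?thesis
      using assms \<open>b > 0\<close> by (auto simp: u_def bump_eq_0)
  qed
  ultimately have "u \<in> C2c (rect a)"
    unfolding C2c_def by blast
  moreover have "u (a/2, b/2) \<noteq> 0"
    using bump_midpoint_pos[of "a/4" "3*a/4"] bump_midpoint_pos[of "b/4" "3*b/4"] assms \<open>b > 0\<close>
    by (simp add: u_def field_simps)
  ultimately show ?thesis by blast
qed

section \<open>The eigenvalue bound\<close>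

lemma rayleigh_quotient_rect_ge:
  assumes "a > 0" "u \<in> C2c (rect a)" "u p \<noteq> 0"
  shows "omega1 ^ 4 * (a ^ 4 + 1 / a ^ 4) + 2 * pi ^ 4
    \<le> integral (rect a) (\<lambda>p. (laplacian u p)\<^sup>2) / integral (rect a) (\<lambda>p. (u p)\<^sup>2)"
proof -
  obtain K where K: "compact K" "K \<subseteq> rect a" "\<And>p. p \<notin> K \<Longrightarrow> u p = 0" and "C2 u"
    using assms(2) unfolding C2c_def by auto
  have "K \<noteq> {}"
    using K(3)[of p] assms(3) by auto
  moreover have "K \<subseteq> {0<..<a} \<times> {0<..<1/a}"
    using K(2) unfolding rect_def .
  ultimately obtain x\<^sub>0 x\<^sub>1 y\<^sub>0 y\<^sub>1 where rectangle: "0 < x\<^sub>0" "x\<^sub>0 \<le> x\<^sub>1" "x\<^sub>1 < a" "0 < y\<^sub>0" "y\<^sub>0 \<le> y\<^sub>1" "y\<^sub>1 < 1/a"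
      "K \<subseteq> {x\<^sub>0..x\<^sub>1} \<times> {y\<^sub>0..y\<^sub>1}"
    using compact_subset_open_rectangle[OF K(1)] by blast
  have "u (x, y) = 0" if "(x, y) \<notin> {x\<^sub>0..x\<^sub>1} \<times> {y\<^sub>0..y\<^sub>1}" for x y
    using K(3) rectangle(7) that by blast
  then interpret supported_in_rectangle u a "1/a" x\<^sub>0 x\<^sub>1 y\<^sub>0 y\<^sub>1
    using \<open>C2 u\<close> rectangle by unfold_locales auto
  have rect_box: "rect a = box (0, 0) (a, 1/a)"
    unfolding rect_def by (auto simp: box_def Basis_prod_def inner_prod_def)
  have "(omega1/a) ^ 4 + (omega1/(1/a)) ^ 4 + 2 * (pi/a)\<^sup>2 * (pi/(1/a))\<^sup>2 = omega1 ^ 4 * (a ^ 4 + 1 / a ^ 4) + 2 * pi ^ 4"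
    using assms(1) by (simp add: field_simps power2_eq_square power4_eq_xxxx)
  then show ?thesis
    using integral_laplacian_squared_ge integral_square_pos[OF assms(3)]
    unfolding rect_box integral_open_interval by (simp add: pos_le_divide_eq)
qed

theorem mainTheorem4:
  fixes a :: real
  assumes "a \<ge> 1"
  shows "clamped_lambda1 (rect a) \<ge> omega1 ^ 4 * (a ^ 4 + 1 / a ^ 4) + 2 * pi ^ 4"
  unfolding clamped_lambda1_def
proof (rule cINF_greatest)
  show "{u \<in> C2c (rect a). \<exists>p. u p \<noteq> 0} \<noteq> {}"
    using C2c_rect_nontrivial[of a] assms by auto
qed (use rayleigh_quotient_rect_ge assms in auto)

end
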